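(* Let $0<p<1$ and $\alpha>-1$, let $\beta=\frac{1-p}{1+\alpha p}$, and define the sequence $(f_i)_{i\ge1}$ by $$f_1=\frac{p}{1+\beta(1+\alpha)},\qquad f_i=\frac{\beta(i-1+\alpha)}{1+\beta(i+\alpha)}\,f_{i-1}\quad (i>1).$$ Then (I) for all $i\ge1$, $0<f_i<1$ and $f_i>f_{i+1}$; and (II) $\sum_{i=1}^\infty f_i=p$ and $\sum_{i=1}^\infty i f_i = 1$.
   Context: Equivalently, $(f_i)$ is the unique solution of $f_1=p-\beta(1+\alpha)f_1$ and $f_i=\beta\big((i-1+\alpha)f_{i-1}-(i+\alpha)f_i\big)$ for $i>1$. *)

theory Defs
  imports "HOL-Analysis.Analysis"
begin

definition betaA :: "real \<Rightarrow> real \<Rightarrow> real" where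
  "betaA p \<alpha> = (1 - p) / (1 + \<alpha> * p)"

text \<open>The sequence f_i for i >= 1; the value at index 0 is an unused dummy (0).\<close>
fun fA :: "real \<Rightarrow> real \<Rightarrow> nat \<Rightarrow> real" where
  "fA p \<alpha> 0 = 0"
| "fA p \<alpha> (Suc 0) = p / (1 + betaA p \<alpha> * (1 + \<alpha>))"
| "fA p \<alpha> (Suc (Suc n)) =
     betaA p \<alpha> * (real (Suc (Suc n)) - 1 + \<alpha>) / (1 + betaA p \<alpha> * (real (Suc (Suc n)) + \<alpha>))
       * fA p \<alpha> (Suc n)"

end

theory Submission
  imports Defs
begin

text \<open>
  Put \<open>w\<^sub>0 = p\<close> and \<open>w\<^sub>n = \<beta> (n + \<alpha>) f\<^sub>n\<close> for \<open>n \<ge> 1\<close>. The recursion says precisely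
  \<open>f\<^sub>n\<^sub>+\<^sub>1 = w\<^sub>n - w\<^sub>n\<^sub>+\<^sub>1\<close>, so \<open>w\<close> decreases, \<open>f\<^sub>1 + \<dots> + f\<^sub>N = p - w\<^sub>N\<close>, and summation by
  parts gives \<open>(1 - \<beta>) (f\<^sub>1 + 2 f\<^sub>2 + \<dots> + N f\<^sub>N) = p + \<beta> \<alpha> (p - w\<^sub>N) - (N + 1) w\<^sub>N\<close>.
  The right-hand side is bounded, so the first-moment series converges, and with it \<open>\<Sum> w\<^sub>n\<close>.
  Hence \<open>w\<^sub>N \<rightarrow> 0\<close>, and \<open>N w\<^sub>N\<close> converges; its limit must vanish, for otherwise \<open>w\<^sub>n\<close>
  would dominate a multiple of the harmonic series. In the limit the first moment is
  \<open>(p + \<beta> \<alpha> p) / (1 - \<beta>)\<close>, which equals 1 for this particular \<open>\<beta>\<close>.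
\<close>

lemma sum_lessThan_Suc_mult_diff:
  fixes w :: "nat \<Rightarrow> 'a::comm_ring_1"
  shows "(\<Sum>n<N. of_nat (Suc n) * (w n - w (Suc n))) = (\<Sum>n<N. w n) - of_nat N * w N"
  by (induction N) (simp_all add: algebra_simps)

lemma summable_real_mult_limit_eq_0:
  fixes w :: "nat \<Rightarrow> real"
  assumes "summable w" and lim: "(\<lambda>n. real n * w n) \<longlonglongrightarrow> M"
  shows "M = 0"
proof (rule ccontr)
  assume "M \<noteq> 0"
  then have "(\<lambda>n. real n * w n / M) \<longlonglongrightarrow> 1"
    using tendsto_divide[OF lim tendsto_const[of M]] by simp
  then have "\<forall>\<^sub>F n in sequentially. 1 / 2 < real n * w n / M"
    by (rule order_tendstoD) simp
  then have "\<forall>\<^sub>F n in sequentially. norm (inverse (real n)) \<le> 2 / M * w n"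
    using eventually_gt_at_top[of 0]
  proof eventually_elim
    case (elim n)
    then have "1 < 2 / M * w n * real n" by (simp add: field_simps)
    with elim show ?case by (simp add: field_simps)
  qed
  moreover have "summable (\<lambda>n. 2 / M * w n)"
    using \<open>summable w\<close> by (rule summable_mult)
  ultimately have "summable (\<lambda>n. inverse (real n))"
    by (rule summable_comparison_test_ev)
  then show False
    using not_summable_harmonic by blast
qed

lemma flux_first_moment_identity:
  fixes w :: "nat \<Rightarrow> real"
  assumes "w 0 = p"
    and rec: "\<And>n. w (Suc n) = b * (real (Suc n) + \<alpha>) * (w n - w (Suc n))"
  shows "(1 - b) * (\<Sum>n<N. real (Suc n) * (w n - w (Suc n)))
           = p + b * \<alpha> * (p - w N) - real (Suc N) * w N"
proof -
  define E where "E = (\<Sum>n<N. real (Suc n) * (w n - w (Suc n)))"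
  have "(\<Sum>n<N. w (Suc n)) = (\<Sum>n<N. b * (real (Suc n) + \<alpha>) * (w n - w (Suc n)))"
    by (intro sum.cong refl rec)
  also have "\<dots> = b * E + b * \<alpha> * (\<Sum>n<N. w n - w (Suc n))"
    unfolding E_def sum_distrib_left sum.distrib[symmetric] by (simp add: algebra_simps)
  also have "(\<Sum>n<N. w n - w (Suc n)) = p - w N"
    using \<open>w 0 = p\<close> by (simp add: sum_lessThan_telescope')
  finally have "(\<Sum>n<Suc N. w n) = p + b * E + b * \<alpha> * (p - w N)"
    unfolding sum.lessThan_Suc_shift using \<open>w 0 = p\<close> by simp
  moreover have "E = (\<Sum>n<Suc N. w n) - real (Suc N) * w N"
    unfolding E_def sum_lessThan_Suc_mult_diff by (simp add: algebra_simps)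
  ultimately have "E = p + b * E + b * \<alpha> * (p - w N) - real (Suc N) * w N"
    by linarith
  then show ?thesis
    unfolding E_def[symmetric] by (simp add: algebra_simps)
qed

locale flux_recurrence =
  fixes w :: "nat \<Rightarrow> real" and b \<alpha> p :: real
  assumes b_nonneg: "0 \<le> b" and b_less_1: "b < 1" and w_0: "w 0 = p"
    and w_nonneg: "\<And>n. 0 \<le> w n" and w_Suc_le: "\<And>n. w (Suc n) \<le> w n"
    and w_Suc: "\<And>n. w (Suc n) = b * (real (Suc n) + \<alpha>) * (w n - w (Suc n))"
begin

lemma w_le_p: "w n \<le> p"
  using w_0 by (induction n) (auto intro: order_trans[OF w_Suc_le])

lemma summable_moment: "summable (\<lambda>n. real (Suc n) * (w n - w (Suc n)))"
proof (rule bounded_imp_summable)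
  show "0 \<le> real (Suc n) * (w n - w (Suc n))" for n
    using w_Suc_le[of n] by simp
  show "(\<Sum>k\<le>N. real (Suc k) * (w k - w (Suc k))) \<le> (p + b * \<bar>\<alpha>\<bar> * p) / (1 - b)" for N
  proof -
    have "\<alpha> * (p - w (Suc N)) \<le> \<bar>\<alpha>\<bar> * (p - w (Suc N))"
      using w_le_p by (intro mult_right_mono) auto
    also have "\<dots> \<le> \<bar>\<alpha>\<bar> * p"
      using w_nonneg by (intro mult_left_mono) auto
    finally have "b * \<alpha> * (p - w (Suc N)) \<le> b * \<bar>\<alpha>\<bar> * p"
      using b_nonneg by (simp add: mult.assoc mult_left_mono)
    moreover have "0 \<le> real (Suc (Suc N)) * w (Suc N)"
      using w_nonneg by simp
    ultimately have "(1 - b) * (\<Sum>k<Suc N. real (Suc k) * (w k - w (Suc k))) \<le> p + b * \<bar>\<alpha>\<bar> * p"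
      unfolding flux_first_moment_identity[OF w_0 w_Suc] by linarith
    then show ?thesis
      using b_less_1 by (simp add: lessThan_Suc_atMost field_simps)
  qed
qed

lemma summable_w: "summable w"
proof -
  have "norm (w n - w (Suc n)) \<le> real (Suc n) * (w n - w (Suc n))" for n
    using w_Suc_le[of n] by (simp add: mult_le_cancel_right1)
  then have "summable (\<lambda>n. w n - w (Suc n))"
    using summable_moment by (rule summable_comparison_test'[rotated])
  then have "summable (\<lambda>n. b * (real (Suc n) * (w n - w (Suc n))) + b * \<alpha> * (w n - w (Suc n)))"
    by (intro summable_add summable_mult summable_moment)
  moreover have "(\<lambda>n. w (Suc n))
                   = (\<lambda>n. b * (real (Suc n) * (w n - w (Suc n))) + b * \<alpha> * (w n - w (Suc n)))"
    by (rule ext, subst w_Suc) (simp add: algebra_simps)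
  ultimately show ?thesis
    using summable_Suc_iff by metis
qed

lemma drops_sums: "(\<lambda>n. w n - w (Suc n)) sums p"
proof -
  have "(\<lambda>N. p - w N) \<longlonglongrightarrow> p - 0"
    using summable_w by (intro tendsto_intros summable_LIMSEQ_zero)
  then show ?thesis
    unfolding sums_def sum_lessThan_telescope' w_0 by simp
qed

lemma moment_sums: "(\<lambda>n. real (Suc n) * (w n - w (Suc n))) sums ((p + b * \<alpha> * p) / (1 - b))"
proof -
  define E where "E = (\<Sum>n. real (Suc n) * (w n - w (Suc n)))"
  have E_sums: "(\<lambda>n. real (Suc n) * (w n - w (Suc n))) sums E"
    unfolding E_def using summable_moment by (rule summable_sums)
  have "w \<longlonglongrightarrow> 0"
    using summable_w by (rule summable_LIMSEQ_zero)
  then have "(\<lambda>N. p + b * \<alpha> * (p - w N) - (1 - b) * (\<Sum>n<N. real (Suc n) * (w n - w (Suc n))) - w N)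
               \<longlonglongrightarrow> p + b * \<alpha> * (p - 0) - (1 - b) * E - 0"
    using E_sums unfolding sums_def by (intro tendsto_intros)
  moreover have "p + b * \<alpha> * (p - w N) - (1 - b) * (\<Sum>n<N. real (Suc n) * (w n - w (Suc n))) - w N
                   = real N * w N" for N
    unfolding flux_first_moment_identity[OF w_0 w_Suc] by (simp add: algebra_simps)
  ultimately have "(\<lambda>N. real N * w N) \<longlonglongrightarrow> p + b * \<alpha> * p - (1 - b) * E"
    by simp
  then have "p + b * \<alpha> * p - (1 - b) * E = 0"
    using summable_w summable_real_mult_limit_eq_0 by blast
  then have "E = (p + b * \<alpha> * p) / (1 - b)"
    using b_less_1 by (simp add: field_simps)
  then show ?thesis
    using E_sums by simp
qed

end

definition fluxA :: "real \<Rightarrow> real \<Rightarrow> nat \<Rightarrow> real" where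
  "fluxA p \<alpha> n = (if n = 0 then p else betaA p \<alpha> * (real n + \<alpha>) * fA p \<alpha> n)"

context
  fixes p \<alpha> :: real
  assumes p_pos: "0 < p" and p_less_1: "p < 1" and alpha_gt: "\<alpha> > -1"
begin

lemma one_plus_alpha_mult_p_pos: "0 < (1 + \<alpha>) * p"
  using alpha_gt p_pos by simp

lemma one_plus_alpha_p_pos: "0 < 1 + \<alpha> * p"
  using one_plus_alpha_mult_p_pos p_less_1 by (simp add: algebra_simps)

lemma betaA_pos: "0 < betaA p \<alpha>"
  using one_plus_alpha_p_pos p_less_1 by (simp add: betaA_def)

lemma betaA_less_1: "betaA p \<alpha> < 1"
  using one_plus_alpha_mult_p_pos one_plus_alpha_p_pos by (simp add: betaA_def field_simps)

lemma betaA_first_moment: "(p + betaA p \<alpha> * \<alpha> * p) / (1 - betaA p \<alpha>) = 1"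
  using one_plus_alpha_p_pos betaA_less_1 by (simp add: betaA_def field_simps)

lemma betaA_mult_pos: "1 \<le> x \<Longrightarrow> 0 < betaA p \<alpha> * (x + \<alpha>)"
  using alpha_gt betaA_pos by simp

lemma fA_Suc:
  assumes "n \<ge> 1"
  shows "fA p \<alpha> (Suc n)
           = betaA p \<alpha> * (real n + \<alpha>) / (1 + betaA p \<alpha> * (real (Suc n) + \<alpha>)) * fA p \<alpha> n"
  using assms by (cases n) (simp_all add: algebra_simps)

lemma fA_Suc_ratio_bounds:
  assumes "n \<ge> 1"
  shows "0 < betaA p \<alpha> * (real n + \<alpha>) / (1 + betaA p \<alpha> * (real (Suc n) + \<alpha>))"
    and "betaA p \<alpha> * (real n + \<alpha>) / (1 + betaA p \<alpha> * (real (Suc n) + \<alpha>)) < 1"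
proof -
  have num: "0 < betaA p \<alpha> * (real n + \<alpha>)"
    using assms by (intro betaA_mult_pos) simp
  then show "0 < betaA p \<alpha> * (real n + \<alpha>) / (1 + betaA p \<alpha> * (real (Suc n) + \<alpha>))"
    using betaA_pos by (simp add: algebra_simps)
  show "betaA p \<alpha> * (real n + \<alpha>) / (1 + betaA p \<alpha> * (real (Suc n) + \<alpha>)) < 1"
    using num betaA_pos by (simp add: algebra_simps)
qed

lemma fA_pos: "n \<ge> 1 \<Longrightarrow> 0 < fA p \<alpha> n"
proof (induction n rule: dec_induct)
  case base
  have "0 < 1 + betaA p \<alpha> * (1 + \<alpha>)"
    using betaA_mult_pos[of 1] by simp
  then show ?case
    using p_pos by simp
next
  case (step n)
  then show ?case
    unfolding fA_Suc[OF step(1)] by (intro mult_pos_pos fA_Suc_ratio_bounds(1))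
qed

lemma fA_Suc_less:
  assumes "n \<ge> 1"
  shows "fA p \<alpha> (Suc n) < fA p \<alpha> n"
proof -
  have "fA p \<alpha> (Suc n) < 1 * fA p \<alpha> n"
    unfolding fA_Suc[OF assms]
    by (intro mult_strict_right_mono fA_Suc_ratio_bounds(2) fA_pos assms)
  then show ?thesis
    by simp
qed

lemma fA_less_1: "n \<ge> 1 \<Longrightarrow> fA p \<alpha> n < 1"
proof (induction n rule: dec_induct)
  case base
  have "0 < p * (betaA p \<alpha> * (1 + \<alpha>))"
    using p_pos betaA_mult_pos[of 1] by simp
  then have "fA p \<alpha> 1 < p"
    using betaA_mult_pos[of 1] by (simp add: field_simps)
  then show ?case
    using p_less_1 by simp
next
  case (step n)
  then show ?case
    using fA_Suc_less by fastforce
qed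

lemma fA_Suc_mult: "(1 + betaA p \<alpha> * (real (Suc n) + \<alpha>)) * fA p \<alpha> (Suc n) = fluxA p \<alpha> n"
proof (cases "n = 0")
  case True
  have "0 < 1 + betaA p \<alpha> * (1 + \<alpha>)"
    using betaA_mult_pos[of 1] by simp
  then show ?thesis
    using True by (simp add: fluxA_def)
next
  case False
  then have "n \<ge> 1"
    by simp
  define d where "d = 1 + betaA p \<alpha> * (real (Suc n) + \<alpha>)"
  have "0 < d"
    using betaA_mult_pos[of "real (Suc n)"] by (simp add: d_def)
  have "(1 + betaA p \<alpha> * (real (Suc n) + \<alpha>)) * fA p \<alpha> (Suc n)
        = d * (betaA p \<alpha> * (real n + \<alpha>) / d * fA p \<alpha> n)"
    unfolding fA_Suc[OF \<open>n \<ge> 1\<close>] d_def ..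
  also have "\<dots> = betaA p \<alpha> * (real n + \<alpha>) * fA p \<alpha> n"
    using \<open>0 < d\<close> by simp
  also have "\<dots> = fluxA p \<alpha> n"
    using False by (simp add: fluxA_def)
  finally show ?thesis .
qed

lemma fA_Suc_eq_fluxA_diff: "fA p \<alpha> (Suc n) = fluxA p \<alpha> n - fluxA p \<alpha> (Suc n)"
proof -
  have "fluxA p \<alpha> n - fluxA p \<alpha> (Suc n)
        = (1 + betaA p \<alpha> * (real (Suc n) + \<alpha>)) * fA p \<alpha> (Suc n)
          - betaA p \<alpha> * (real (Suc n) + \<alpha>) * fA p \<alpha> (Suc n)"
    unfolding fA_Suc_mult by (simp add: fluxA_def)
  then show ?thesis
    by (simp add: algebra_simps)
qed

lemma fluxA_nonneg: "0 \<le> fluxA p \<alpha> n"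
proof (cases "n = 0")
  case False
  then have "0 < betaA p \<alpha> * (real n + \<alpha>)" and "0 < fA p \<alpha> n"
    by (simp_all add: betaA_mult_pos fA_pos)
  then show ?thesis
    using False by (simp add: fluxA_def)
qed (simp add: fluxA_def p_pos less_imp_le)

lemma fluxA_Suc_le: "fluxA p \<alpha> (Suc n) \<le> fluxA p \<alpha> n"
  using fA_pos[of "Suc n"] by (simp add: fA_Suc_eq_fluxA_diff)

lemma fluxA_Suc:
  "fluxA p \<alpha> (Suc n) = betaA p \<alpha> * (real (Suc n) + \<alpha>) * (fluxA p \<alpha> n - fluxA p \<alpha> (Suc n))"
  unfolding fA_Suc_eq_fluxA_diff[symmetric] by (simp add: fluxA_def)

end

theorem lemmaA3:
  fixes p \<alpha> :: real
  assumes "0 < p" and "p < 1" and "\<alpha> > -1"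
  shows "(\<forall>i\<ge>1. 0 < fA p \<alpha> i \<and> fA p \<alpha> i < 1 \<and> fA p \<alpha> i > fA p \<alpha> (i + 1))
       \<and> ((\<lambda>n. fA p \<alpha> (n + 1)) sums p)
       \<and> ((\<lambda>n. real (n + 1) * fA p \<alpha> (n + 1)) sums 1)"
proof -
  interpret flux_recurrence "fluxA p \<alpha>" "betaA p \<alpha>" \<alpha> p
    using betaA_pos[OF assms] betaA_less_1[OF assms] fluxA_nonneg[OF assms]
      fluxA_Suc_le[OF assms] fluxA_Suc[OF assms]
    by unfold_locales (simp_all add: fluxA_def)
  show ?thesis
    using drops_sums moment_sums fA_pos[OF assms] fA_less_1[OF assms] fA_Suc_less[OF assms]
    by (simp add: fA_Suc_eq_fluxA_diff[OF assms, symmetric] betaA_first_moment[OF assms])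
qed

end
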